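(* Let $c$ and $d$ be two primitive combinatorial closed curves that are not freely homotopic. Then the sequence of double points of a double path of $(c,d)$ contains no double point more than once. Moreover, every double path of $(c,d)$ has length less than $|c|+|d|-1$.
   Context: A combinatorial closed curve $c$ of length $|c|$ has vertices $c(i)$ and arcs $c[i,i+1]$, $i\in\mathbb{Z}/|c|\mathbb{Z}$. It is primitive if its free homotopy class is not a proper power of another class. A forward index path of length $\ell$ of $c$ is $(i,i+1,\dots,i+\ell)$ (indices mod $|c|$), with image path $(c[i,i+1],\dots,c[i+\ell-1,i+\ell])$. A double point of $(c,d)$ is a pair $(i,j)\in\mathbb{Z}/|c|\mathbb{Z}\times\mathbb{Z}/|d|\mathbb{Z}$ with $c(i)=d(j)$. A double path of $(c,d)$ of length $\ell$ is a pair of forward index paths $((i,\dots,i+\ell)_c,(j,\dots,j+\ell)_d)$ with identical image paths; its sequence of double points is $(i+k,j+k)$, $k=0,\dots,\ell$. *)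

theory Defs
  imports Main
begin

text \<open>Combinatorial surfaces are modelled as combinatorial maps on a finite type
  of darts (oriented arcs): a permutation sigma rotating darts around their tail
  vertex and a fixed-point-free involution alpha reversing darts.\<close>

definition comb_map :: "('d::finite \<Rightarrow> 'd) \<Rightarrow> ('d \<Rightarrow> 'd) \<Rightarrow> bool" where
  "comb_map \<sigma> \<alpha> \<longleftrightarrow> bij \<sigma> \<and> (\<forall>x. \<alpha> (\<alpha> x) = x \<and> \<alpha> x \<noteq> x)"

text \<open>Tail vertex of a dart (its sigma-orbit); the head of x is the tail of alpha x.\<close>
definition vertex :: "('d \<Rightarrow> 'd) \<Rightarrow> 'd \<Rightarrow> 'd set" where
  "vertex \<sigma> x = {(\<sigma> ^^ n) x | n. True}"

definition face_deg :: "('d \<Rightarrow> 'd) \<Rightarrow> ('d \<Rightarrow> 'd) \<Rightarrow> 'd \<Rightarrow> nat" where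
  "face_deg \<sigma> \<alpha> x = (LEAST n. n > 0 \<and> ((\<sigma> \<circ> \<alpha>) ^^ n) x = x)"

definition face_walk :: "('d \<Rightarrow> 'd) \<Rightarrow> ('d \<Rightarrow> 'd) \<Rightarrow> 'd \<Rightarrow> 'd list" where
  "face_walk \<sigma> \<alpha> x = map (\<lambda>k. ((\<sigma> \<circ> \<alpha>) ^^ k) x) [0..<face_deg \<sigma> \<alpha> x]"

text \<open>A combinatorial closed curve c of length |c| = length c: arc c[i,i+1] is c ! i,
  vertex c(i) is the tail of c ! i; indices are taken modulo length c.\<close>
definition closed_curve :: "('d \<Rightarrow> 'd) \<Rightarrow> ('d \<Rightarrow> 'd) \<Rightarrow> 'd list \<Rightarrow> bool" where
  "closed_curve \<sigma> \<alpha> c \<longleftrightarrow> c \<noteq> [] \<and>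
     (\<forall>i < length c. vertex \<sigma> (\<alpha> (c ! i)) = vertex \<sigma> (c ! (Suc i mod length c)))"

definition htp_step :: "('d \<Rightarrow> 'd) \<Rightarrow> ('d \<Rightarrow> 'd) \<Rightarrow> 'd list \<Rightarrow> 'd list \<Rightarrow> bool" where
  "htp_step \<sigma> \<alpha> c d \<longleftrightarrow> closed_curve \<sigma> \<alpha> c \<and> closed_curve \<sigma> \<alpha> d \<and>
     ((\<exists>xs ys. c = xs @ ys \<and> d = ys @ xs) \<or>
      (\<exists>xs ys e. c = xs @ ys \<and> d = xs @ [e, \<alpha> e] @ ys) \<or>
      (\<exists>xs ys e. c = xs @ ys \<and> d = xs @ face_walk \<sigma> \<alpha> e @ ys))"

definition freely_homotopic :: "('d \<Rightarrow> 'd) \<Rightarrow> ('d \<Rightarrow> 'd) \<Rightarrow> 'd list \<Rightarrow> 'd list \<Rightarrow> bool" where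
  "freely_homotopic \<sigma> \<alpha> c d \<longleftrightarrow>
     (\<lambda>a b. htp_step \<sigma> \<alpha> a b \<or> htp_step \<sigma> \<alpha> b a)\<^sup>*\<^sup>* c d"

definition curve_power :: "'d list \<Rightarrow> nat \<Rightarrow> 'd list" where
  "curve_power w k = concat (replicate k w)"

definition primitive :: "('d \<Rightarrow> 'd) \<Rightarrow> ('d \<Rightarrow> 'd) \<Rightarrow> 'd list \<Rightarrow> bool" where
  "primitive \<sigma> \<alpha> c \<longleftrightarrow>
     \<not> (\<exists>w k. k \<ge> 2 \<and> closed_curve \<sigma> \<alpha> w \<and> freely_homotopic \<sigma> \<alpha> c (curve_power w k))"

definition double_path :: "'d list \<Rightarrow> 'd list \<Rightarrow> nat \<Rightarrow> nat \<Rightarrow> nat \<Rightarrow> bool" where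
  "double_path c d i j l \<longleftrightarrow> i < length c \<and> j < length d \<and>
     (\<forall>k < l. c ! ((i + k) mod length c) = d ! ((j + k) mod length d))"

definition dp_seq :: "'d list \<Rightarrow> 'd list \<Rightarrow> nat \<Rightarrow> nat \<Rightarrow> nat \<Rightarrow> nat \<times> nat" where
  "dp_seq c d i j k = ((i + k) mod length c, (j + k) mod length d)"

end

theory Submission
  imports Defs
begin

text \<open>Read the arcs of c and d from the start of a double path as two sequences; they agree
  on the double path and are periodic with periods |c| and |d|.  A repeated double point
  produces a common period of both sequences, so the agreement propagates to all of
  them; a double path of length at least |c| + |d| - 1 has the same effect by the
  Fine--Wilf theorem.  If the two periodic sequences agree everywhere, Fine--Wilf makes
  gcd |c| |d| a period, so by primitivity both curves are cyclic shifts of the same word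
  of that length, hence freely homotopic.\<close>

definition has_period :: "(nat \<Rightarrow> 'a) \<Rightarrow> nat \<Rightarrow> nat \<Rightarrow> bool" where
  "has_period w p L \<longleftrightarrow> (\<forall>x. x + p < L \<longrightarrow> w x = w (x + p))"

lemma has_periodD: "has_period w p L \<Longrightarrow> x + p < L \<Longrightarrow> w x = w (x + p)"
  unfolding has_period_def by blast

lemma has_period_mod:
  assumes "has_period w p L" "p > 0" "x < L"
  shows "w x = w (x mod p)"
  using assms(3)
proof (induction x rule: less_induct)
  case (less x)
  show ?case
  proof (cases "x < p")
    case False
    then have "w (x - p) = w (x - p + p)"
      using less.prems by (intro has_periodD[OF assms(1)]) simp
    also have "x - p + p = x" using False by simp
    finally have "w (x - p) = w x" .
    moreover have "w (x - p) = w ((x - p) mod p)" using less assms(2) False by simp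
    ultimately show ?thesis using False by (simp add: le_mod_geq)
  qed simp
qed

lemma has_period_cong:
  assumes "has_period w p L" "p > 0" "x < L" "y < L" "x mod p = y mod p"
  shows "w x = w y"
  using has_period_mod[OF assms(1,2)] assms(3-5) by metis

lemma has_period_mono:
  "has_period w p L \<Longrightarrow> L' \<le> L \<Longrightarrow> has_period w p L'"
  unfolding has_period_def using less_le_trans by blast

lemma has_period_diff:
  assumes "has_period w p L" "has_period w q L" "p < q"
  shows "has_period w (q - p) (L - p)"
  unfolding has_period_def
proof (intro allI impI)
  fix x assume x: "x + (q - p) < L - p"
  have "w x = w (x + q)" using x by (intro has_periodD[OF assms(2)]) linarith
  also have "\<dots> = w (x + (q - p) + p)" using assms(3) by simp
  also have "\<dots> = w (x + (q - p))" using x by (intro has_periodD[OF assms(1), symmetric]) linarith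
  finally show "w x = w (x + (q - p))" .
qed

text \<open>A period of the whole word reduces every position into the prefix, where the
  shorter period already holds.\<close>
lemma has_period_extend:
  assumes "has_period w p L" "p > 0" "2 * p \<le> L" "has_period w g (L - p)" "g dvd p"
  shows "has_period w g L"
  unfolding has_period_def
proof (intro allI impI)
  fix x assume x: "x + g < L"
  have g: "g > 0" using assms(2,5) by (metis dvd_0_left_iff gr0I)
  have "x mod p < p" "(x + g) mod p < p" using assms(2) by simp_all
  then have small: "x mod p < L - p" "(x + g) mod p < L - p" using assms(3) by linarith+
  have "(x mod p) mod g = ((x + g) mod p) mod g"
    using assms(5) by (simp add: mod_mod_cancel)
  then have "w (x mod p) = w ((x + g) mod p)"
    using has_period_cong[OF assms(4) g small] by simp
  then show "w x = w (x + g)"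
    using has_period_mod[OF assms(1,2)] x by (metis add_lessD1)
qed

theorem fine_wilf:
  assumes "p > 0" "q > 0" "p + q - 1 \<le> L" "has_period w p L" "has_period w q L"
  shows "has_period w (gcd p q) L"
  using assms
proof (induction "p + q" arbitrary: p q L rule: less_induct)
  case less
  have step: "has_period w (gcd a b) L"
    if ab: "a < b" "a + b = p + q" "a > 0" "a + b - 1 \<le> L" "has_period w a L" "has_period w b L"
    for a b
  proof -
    have "has_period w (gcd a (b - a)) (L - a)"
    proof (rule less.hyps)
      show "a + (b - a) < p + q" "0 < b - a" "a + (b - a) - 1 \<le> L - a" using ab by auto
      show "has_period w a (L - a)" using ab(5) by (rule has_period_mono) simp
      show "has_period w (b - a) (L - a)" using ab(5,6,1) by (rule has_period_diff)
      show "0 < a" by (rule ab(3))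
    qed
    moreover have "gcd a (b - a) = gcd a b"
      using gcd_diff1_nat[of a b] ab(1) by (simp only: gcd.commute[of a] less_imp_le)
    ultimately have "has_period w (gcd a b) (L - a)" by simp
    moreover have "2 * a \<le> L" using ab(1,4) by linarith
    ultimately show ?thesis using has_period_extend[OF ab(5,3)] by simp
  qed
  consider "p < q" | "q < p" | "p = q" by linarith
  then show ?case
  proof cases
    case 1 then show ?thesis using step[of p q] less.prems by simp
  next
    case 2 then show ?thesis using step[of q p] less.prems by (simp add: gcd.commute add.commute)
  qed (use less.prems in simp)
qed

lemma periodic_eq_mod_gcd:
  fixes F G :: "nat \<Rightarrow> 'a"
  assumes "0 < m" "0 < n" "m + n - 1 \<le> L"
    and F: "\<And>x. F (x mod m) = F x" and G: "\<And>x. G (x mod n) = G x"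
    and FG: "\<And>x. x < L \<Longrightarrow> F x = G x"
  shows "F k = F (k mod gcd m n)"
proof -
  have "has_period F m L" unfolding has_period_def using F by (metis mod_add_self2)
  moreover have "has_period F n L"
    unfolding has_period_def using FG G by (metis add_lessD1 mod_add_self2)
  ultimately have "has_period F (gcd m n) L" by (rule fine_wilf[OF assms(1-3)])
  moreover have "k mod m < L" using assms(1-3) mod_less_divisor[of m k] by linarith
  ultimately have "F (k mod m) = F (k mod m mod gcd m n)"
    using assms(1) by (intro has_period_mod) simp_all
  then show ?thesis using F by (simp add: mod_mod_cancel)
qed

lemma freely_homotopic_eq_equivclp: "freely_homotopic \<sigma> \<alpha> = equivclp (htp_step \<sigma> \<alpha>)"
  unfolding freely_homotopic_def equivclp_def by (simp add: symclp_def[abs_def])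

lemma primitive_freely_homotopic:
  assumes "primitive \<sigma> \<alpha> c" "freely_homotopic \<sigma> \<alpha> c c'"
  shows "primitive \<sigma> \<alpha> c'"
  using assms unfolding primitive_def freely_homotopic_eq_equivclp
  by (meson equivclp_trans)

lemma closed_curve_rotate:
  assumes "closed_curve \<sigma> \<alpha> c"
  shows "closed_curve \<sigma> \<alpha> (rotate i c)"
proof -
  let ?m = "length c"
  have m: "?m > 0" using assms by (simp add: closed_curve_def)
  have "vertex \<sigma> (\<alpha> (rotate i c ! k)) = vertex \<sigma> (rotate i c ! (Suc k mod ?m))" if k: "k < ?m" for k
  proof -
    have "(i + k) mod ?m < ?m" using m by simp
    then have "vertex \<sigma> (\<alpha> (c ! ((i + k) mod ?m))) = vertex \<sigma> (c ! (Suc ((i + k) mod ?m) mod ?m))"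
      using assms unfolding closed_curve_def by blast
    moreover have "(i + Suc k mod ?m) mod ?m = Suc ((i + k) mod ?m) mod ?m"
      by (simp add: mod_add_right_eq mod_Suc_eq)
    ultimately show ?thesis using k m by (simp add: nth_rotate)
  qed
  then show ?thesis using assms by (simp add: closed_curve_def)
qed

lemma freely_homotopic_rotate:
  assumes "closed_curve \<sigma> \<alpha> c"
  shows "freely_homotopic \<sigma> \<alpha> c (rotate i c)"
proof -
  have "c = take (i mod length c) c @ drop (i mod length c) c"
    and "rotate i c = drop (i mod length c) c @ take (i mod length c) c"
    by (simp_all add: rotate_drop_take)
  then have "htp_step \<sigma> \<alpha> c (rotate i c)"
    using assms closed_curve_rotate[OF assms] unfolding htp_step_def by blast
  then show ?thesis unfolding freely_homotopic_eq_equivclp ..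
qed

lemma nth_curve_power:
  "k < n * length u \<Longrightarrow> curve_power u n ! k = u ! (k mod length u)"
proof (induction n arbitrary: k)
  case (Suc n)
  show ?case
  proof (cases "k < length u")
    case False
    then have "curve_power u (Suc n) ! k = curve_power u n ! (k - length u)"
      by (simp add: curve_power_def nth_append)
    also have "\<dots> = u ! ((k - length u) mod length u)" using Suc False by simp
    finally show ?thesis using False by (simp add: le_mod_geq)
  qed (simp add: curve_power_def nth_append)
qed simp

lemma periodic_list_eq_curve_power:
  assumes "g dvd length xs" "\<forall>k < length xs. xs ! k = xs ! (k mod g)"
  shows "xs = curve_power (take g xs) (length xs div g)"
proof (cases "xs = []")
  case False
  have "g \<noteq> 0" using False assms(1) by (metis dvd_0_left_iff length_0_conv)
  then have g: "0 < g" "g \<le> length xs" using False assms(1) by (simp_all add: dvd_imp_le)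
  show ?thesis
  proof (rule nth_equalityI)
    show "length xs = length (curve_power (take g xs) (length xs div g))"
      using assms(1) g by (simp add: curve_power_def length_concat sum_list_replicate min_def)
    fix k assume k: "k < length xs"
    have "length (take g xs) = g" using g by simp
    moreover have "k < length xs div g * g" using k assms(1) by simp
    ultimately have "curve_power (take g xs) (length xs div g) ! k = xs ! (k mod g)"
      using g by (simp add: nth_curve_power)
    then show "xs ! k = curve_power (take g xs) (length xs div g) ! k"
      using assms(2) k by simp
  qed
qed (simp add: curve_power_def)

lemma closed_curve_take_period:
  assumes "closed_curve \<sigma> \<alpha> xs" "0 < g" "g dvd length xs"
    and "\<forall>k < length xs. xs ! k = xs ! (k mod g)"
  shows "closed_curve \<sigma> \<alpha> (take g xs)"
proof -
  let ?m = "length xs"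
  have g: "g \<le> ?m" using assms(1,3) by (simp add: closed_curve_def dvd_imp_le)
  have "vertex \<sigma> (\<alpha> (xs ! k)) = vertex \<sigma> (xs ! (Suc k mod g))" if "k < g" for k
  proof -
    have "vertex \<sigma> (\<alpha> (xs ! k)) = vertex \<sigma> (xs ! (Suc k mod ?m))"
      using assms(1) that g unfolding closed_curve_def by auto
    moreover have "Suc k mod ?m mod g = Suc k mod g" using assms(3) by (simp add: mod_mod_cancel)
    ultimately show ?thesis
      using assms(2,4) g by (metis less_le_trans mod_less_divisor)
  qed
  then show ?thesis using assms(1,2) g by (simp add: closed_curve_def)
qed

lemma primitive_period_eq_length:
  assumes "closed_curve \<sigma> \<alpha> c" "primitive \<sigma> \<alpha> c" "0 < g" "g dvd length c"
    and "\<forall>k < length c. c ! k = c ! (k mod g)"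
  shows "g = length c"
proof -
  have "c = curve_power (take g c) (length c div g)"
    using assms(4,5) by (rule periodic_list_eq_curve_power)
  moreover have "closed_curve \<sigma> \<alpha> (take g c)"
    using assms(1,3-5) by (rule closed_curve_take_period)
  ultimately have "length c div g < 2"
    using assms(2) unfolding primitive_def freely_homotopic_eq_equivclp
    by (metis equivclp_refl not_le)
  moreover have "length c div g \<noteq> 0"
    using assms(1,4) by (simp add: closed_curve_def dvd_div_eq_0_iff)
  ultimately have "length c div g = 1" by linarith
  then show ?thesis using dvd_mult_div_cancel[OF assms(4)] by simp
qed

lemma shift_period_gcd:
  assumes "0 < length c" "0 < length d"
    and agree: "\<forall>k. c ! ((i + k) mod length c) = d ! ((j + k) mod length d)"
  shows "c ! ((i + k) mod length c) = c ! ((i + k mod gcd (length c) (length d)) mod length c)"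
  using periodic_eq_mod_gcd[OF assms(1,2) order_refl,
      of "\<lambda>k. c ! ((i + k) mod length c)" "\<lambda>k. d ! ((j + k) mod length d)"] agree
  by (simp add: mod_add_right_eq)

lemma gcd_length_eq_if_shifts_agree:
  assumes "closed_curve \<sigma> \<alpha> c" "primitive \<sigma> \<alpha> c" "0 < length d"
    and agree: "\<forall>k. c ! ((i + k) mod length c) = d ! ((j + k) mod length d)"
  shows "gcd (length c) (length d) = length c"
proof -
  let ?g = "gcd (length c) (length d)"
  have c: "0 < length c" using assms(1) by (simp add: closed_curve_def)
  have "\<forall>k < length (rotate i c). rotate i c ! k = rotate i c ! (k mod ?g)"
  proof (intro allI impI)
    fix k assume k: "k < length (rotate i c)"
    have "0 < ?g" "?g \<le> length c" using c by (simp_all add: dvd_imp_le)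
    then have "k mod ?g < length c" by (meson less_le_trans mod_less_divisor)
    then show "rotate i c ! k = rotate i c ! (k mod ?g)"
      using k shift_period_gcd[OF c assms(3) agree, of k] by (simp add: nth_rotate)
  qed
  moreover have "primitive \<sigma> \<alpha> (rotate i c)"
    using assms(2) freely_homotopic_rotate[OF assms(1)] by (rule primitive_freely_homotopic)
  ultimately have "?g = length (rotate i c)"
    using closed_curve_rotate[OF assms(1)] c by (intro primitive_period_eq_length) simp_all
  then show ?thesis by simp
qed

lemma freely_homotopic_if_shifts_agree:
  assumes "closed_curve \<sigma> \<alpha> c" "primitive \<sigma> \<alpha> c" "closed_curve \<sigma> \<alpha> d" "primitive \<sigma> \<alpha> d"
    and agree: "\<forall>k. c ! ((i + k) mod length c) = d ! ((j + k) mod length d)"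
  shows "freely_homotopic \<sigma> \<alpha> c d"
proof -
  have pos: "0 < length c" "0 < length d" using assms(1,3) by (simp_all add: closed_curve_def)
  have "gcd (length c) (length d) = length c"
    using assms(1,2) pos(2) agree by (rule gcd_length_eq_if_shifts_agree)
  moreover have "gcd (length d) (length c) = length d"
    using assms(3,4) pos(1) by (rule gcd_length_eq_if_shifts_agree[where i = j and j = i]) (simp add: agree)
  ultimately have "length c = length d" by (simp add: gcd.commute)
  then have "rotate i c = rotate j d" using agree by (intro nth_equalityI) (simp_all add: nth_rotate)
  then show ?thesis
    using freely_homotopic_rotate[OF assms(1), of i] freely_homotopic_rotate[OF assms(3), of j]
    unfolding freely_homotopic_eq_equivclp by (metis equivclp_sym equivclp_trans)
qed

lemma mod_add_mod_dvd:
  fixes a k m p :: nat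
  assumes "m dvd p"
  shows "(a + k mod p) mod m = (a + k) mod m"
  by (metis assms mod_add_right_eq mod_mod_cancel)

lemma double_path_repeat_shifts_agree:
  assumes dp: "double_path c d i j l" and "x < y" "y \<le> l"
    and "dp_seq c d i j x = dp_seq c d i j y"
  shows "c ! ((i + x + k) mod length c) = d ! ((j + x + k) mod length d)"
proof -
  let ?p = "y - x"
  have "(i + x) mod length c = (i + y) mod length c" "(j + x) mod length d = (j + y) mod length d"
    using assms(4) by (simp_all add: dp_seq_def)
  then have "length c dvd ?p" "length d dvd ?p"
    using assms(2) mod_eq_dvd_iff_nat[of "i + x" "i + y" "length c"]
      mod_eq_dvd_iff_nat[of "j + x" "j + y" "length d"] by simp_all
  then have "(i + x + k) mod length c = (i + (x + k mod ?p)) mod length c"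
    and "(j + x + k) mod length d = (j + (x + k mod ?p)) mod length d"
    using mod_add_mod_dvd[of "length c" ?p "i + x" k] mod_add_mod_dvd[of "length d" ?p "j + x" k]
    by (simp_all add: add.assoc)
  moreover have "x + k mod ?p < l"
    using assms(2,3) mod_less_divisor[of ?p k] by linarith
  ultimately show ?thesis using dp by (simp add: double_path_def)
qed

lemma double_path_long_shifts_agree:
  assumes dp: "double_path c d i j l" and long: "length c + length d - 1 \<le> l"
  shows "c ! ((i + k) mod length c) = d ! ((j + k) mod length d)"
proof -
  let ?m = "length c" and ?n = "length d"
  have pos: "0 < ?m" "0 < ?n" using dp by (auto simp: double_path_def)
  define F where "F k = c ! ((i + k) mod ?m)" for k
  define G where "G k = d ! ((j + k) mod ?n)" for k
  have FG: "x < l \<Longrightarrow> F x = G x" for x using dp by (simp add: F_def G_def double_path_def)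
  have Fm: "F (x mod ?m) = F x" and Gn: "G (x mod ?n) = G x" for x
    by (simp_all add: F_def G_def mod_add_right_eq)
  note F_mod_gcd = periodic_eq_mod_gcd[OF pos long Fm Gn FG]
  have "k mod ?n < l" using pos long mod_less_divisor[of ?n k] by linarith
  then have "G k = F (k mod ?n)" using FG Gn by simp
  also have "\<dots> = F k"
    using F_mod_gcd[of "k mod ?n"] F_mod_gcd[of k] by (simp add: mod_mod_cancel)
  finally show ?thesis by (simp add: F_def G_def)
qed

theorem lemma19:
  fixes \<sigma> \<alpha> :: "'d::finite \<Rightarrow> 'd" and c d :: "'d list" and i j l :: nat
  assumes "comb_map \<sigma> \<alpha>"
    and "closed_curve \<sigma> \<alpha> c" and "closed_curve \<sigma> \<alpha> d"
    and "primitive \<sigma> \<alpha> c" and "primitive \<sigma> \<alpha> d"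
    and "\<not> freely_homotopic \<sigma> \<alpha> c d"
    and "double_path c d i j l"
  shows "inj_on (dp_seq c d i j) {0..l} \<and> l < length c + length d - 1"
proof
  note homotopic = freely_homotopic_if_shifts_agree[OF assms(2,4,3,5)]
  show "inj_on (dp_seq c d i j) {0..l}"
  proof (rule inj_onI, rule ccontr)
    fix x y assume "x \<in> {0..l}" "y \<in> {0..l}" "dp_seq c d i j x = dp_seq c d i j y" "x \<noteq> y"
    then obtain a b where "a < b" "b \<le> l" "dp_seq c d i j a = dp_seq c d i j b"
      by (metis atLeastAtMost_iff linorder_neqE_nat)
    then have "freely_homotopic \<sigma> \<alpha> c d"
      using double_path_repeat_shifts_agree[OF assms(7)] by (intro homotopic[of "i + a" "j + a"]) blast
    with assms(6) show False ..
  qed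
  show "l < length c + length d - 1"
    using homotopic[of i j] double_path_long_shifts_agree[OF assms(7)] assms(6) by (meson not_le)
qed

end
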